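(* Let $m\in\mathbb{N}$, $m\geq2$, and $T:[0,1)\to[0,1)$, $T(x)=mx\bmod1$. Let $A\subset[0,1)$ be a nowhere dense set with $T(A)\subset A$. Then for every $t\in(0,1)$ that is normal in base $m$ and every integer $i\neq0$, $$A+it\subset\mathbb{Q}^c\quad\text{and}\quad \frac{A}{it}\subset\mathbb{Q}^c.$$
   Context: An $m$-adic expansion of $t\in(0,1)$ is a sequence $(t_k)\in\{0,\dots,m-1\}^{\mathbb{N}}$ with $t=\sum_{k\ge1}t_km^{-k}$. It is normal if for every finite nonempty word $\mathbf a$ over $\{0,\dots,m-1\}$, the limiting frequency of occurrences of $\mathbf a$ as a subword of $(t_k)$ equals $m^{-|\mathbf a|}$, where $|\mathbf a|$ is the length of $\mathbf a$; $t$ is normal (in base $m$) if it has a normal $m$-adic expansion. Notation: $A+it=\{x+it:x\in A\}$, $\frac{A}{it}=\{x/(it):x\in A\setminus\{0\}\}$. $\mathbb{Q}^c$ denotes the set of irrational real numbers. *)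

theory Defs
  imports "HOL-Analysis.Analysis"
begin

text \<open>An m-adic expansion of t: digits d 1, d 2, ... (index 0 unused), each < m,
  with t = sum over k >= 1 of d k / m^k.\<close>
definition m_adic_expansion :: "nat \<Rightarrow> (nat \<Rightarrow> nat) \<Rightarrow> real \<Rightarrow> bool" where
  "m_adic_expansion m d t \<longleftrightarrow>
     (\<forall>k\<ge>1. d k < m) \<and> (\<lambda>k. real (d (Suc k)) / real m ^ Suc k) sums t"

definition occurs_at :: "(nat \<Rightarrow> nat) \<Rightarrow> nat list \<Rightarrow> nat \<Rightarrow> bool" where
  "occurs_at d a k \<longleftrightarrow> (\<forall>j<length a. d (k + j) = a ! j)"

definition normal_expansion :: "nat \<Rightarrow> (nat \<Rightarrow> nat) \<Rightarrow> bool" where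
  "normal_expansion m d \<longleftrightarrow>
     (\<forall>a. a \<noteq> [] \<and> set a \<subseteq> {..<m} \<longrightarrow>
        (\<lambda>N. real (card {k \<in> {1..N}. occurs_at d a k}) / real N)
          \<longlonglongrightarrow> 1 / real m ^ length a)"

definition normal_in_base :: "nat \<Rightarrow> real \<Rightarrow> bool" where
  "normal_in_base m t \<longleftrightarrow> (\<exists>d. m_adic_expansion m d t \<and> normal_expansion m d)"

definition times_mod1 :: "nat \<Rightarrow> real \<Rightarrow> real" where
  "times_mod1 m x = frac (real m * x)"

definition nowhere_dense :: "real set \<Rightarrow> bool" where
  "nowhere_dense A \<longleftrightarrow> interior (closure A) = {}"

end

theory Submission
  imports Defs
begin

text \<open>
  Suppose \<open>x = q + r t \<in> A\<close> with \<open>q, r\<close> rational, \<open>r \<noteq> 0\<close>, and \<open>t\<close> normal with digits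
  \<open>d\<close>. Write \<open>D\<close> for a common denominator of \<open>q\<close> and \<open>r\<close>. Then \<open>T\<^sup>n x\<close> agrees modulo 1 with
  \<open>k\<^sub>n / D + r s\<^sub>n\<close>, where \<open>k\<^sub>n < D\<close> and \<open>s\<^sub>n = 0.d\<^sub>n\<^sub>+\<^sub>1 d\<^sub>n\<^sub>+\<^sub>2 \<dots>\<close> is the tail of the expansion.
  By normality every digit block occurs, so the tails are dense in \<open>(0,1)\<close>; by pigeonhole
  the tails with one fixed label \<open>k\<close> have a closure with nonempty interior, and the
  affine map \<open>z \<mapsto> k/D + r z\<close> carries this into an open subset of the closure of \<open>A\<close>,
  contradicting nowhere density.
\<close>

lemma interior_Union_closed_eq_empty:
  fixes \<F> :: "'a::topological_space set set"
  assumes "finite \<F>" "\<And>S. S \<in> \<F> \<Longrightarrow> closed S \<and> interior S = {}"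
  shows "interior (\<Union>\<F>) = {}"
  using assms
proof (induction \<F> rule: finite_induct)
  case (insert S \<F>)
  have "interior (\<Union>\<F> \<union> S) = interior (\<Union>\<F>)"
    using insert by (intro interior_closed_Un_empty_interior closed_Union) auto
  then show ?case
    using insert by (simp add: Un_commute)
qed simp

lemma interior_closure_image_finite_label:
  fixes g :: "'i \<Rightarrow> 'a::topological_space"
  assumes "finite (h ` I)" "interior (closure (g ` I)) \<noteq> {}"
  shows "\<exists>k \<in> h ` I. interior (closure (g ` {i \<in> I. h i = k})) \<noteq> {}"
proof (rule ccontr)
  define C where "C k = closure (g ` {i \<in> I. h i = k})" for k
  assume "\<not> ?thesis"
  then have no_interior: "interior (\<Union>(C ` h ` I)) = {}"
    using assms(1) unfolding C_def by (intro interior_Union_closed_eq_empty) auto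
  have "closure (g ` I) \<subseteq> \<Union>(C ` h ` I)"
  proof (rule closure_minimal)
    show "g ` I \<subseteq> \<Union>(C ` h ` I)"
    proof clarify
      fix i assume "i \<in> I"
      then have "g i \<in> g ` {j \<in> I. h j = h i}"
        by blast
      then have "g i \<in> C (h i)"
        unfolding C_def by (rule subsetD[OF closure_subset])
      then show "g i \<in> \<Union>(C ` h ` I)"
        using \<open>i \<in> I\<close> by blast
    qed
    show "closed (\<Union>(C ` h ` I))"
      using assms(1) unfolding C_def by (intro closed_UN) auto
  qed
  then have "interior (closure (g ` I)) \<subseteq> interior (\<Union>(C ` h ` I))"
    by (rule interior_mono)
  with no_interior assms(2) show False
    by simp
qed

lemma interior_closure_frac_affine_image:
  fixes S A :: "real set"
  assumes S: "interior (closure S) \<noteq> {}" and "r \<noteq> 0"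
    and A: "\<And>z. z \<in> S \<Longrightarrow> frac (c + r * z) \<in> A"
  shows "interior (closure A) \<noteq> {}"
proof -
  obtain y where y: "y \<in> interior (closure S)"
    using S by blast
  \<comment> \<open>The integer shift puts \<open>\<phi> y\<close> into \<open>[0,1)\<close>, where \<open>frac\<close> is the identity.\<close>
  define \<phi> where "\<phi> z = (c - of_int \<lfloor>c + r * y\<rfloor>) + r * z" for z
  have "\<phi> y = frac (c + r * y)"
    unfolding \<phi>_def frac_def by simp
  then have "\<phi> y \<in> {0..1}"
    using frac_lt_1[of "c + r * y"] by simp
  define U where "U = \<phi> ` interior (closure S)"
  have "open U"
    unfolding U_def \<phi>_def
    using open_affinity[OF open_interior \<open>r \<noteq> 0\<close>, where a = "c - of_int \<lfloor>c + r * y\<rfloor>"]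
    by simp
  have "\<phi> ` closure S \<subseteq> closure (\<phi> ` S)"
    unfolding \<phi>_def
    by (intro image_closure_subset continuous_intros) (auto intro: closure_subset[THEN subsetD])
  then have U_closure: "U \<subseteq> closure (\<phi> ` S)"
    unfolding U_def using interior_subset by blast
  have "U \<inter> closure {0<..<1} \<noteq> {}"
    using y \<open>\<phi> y \<in> {0..1}\<close> unfolding U_def by auto
  then have "U \<inter> {0<..<1} \<noteq> {}"
    using open_Int_closure_eq_empty[OF \<open>open U\<close>] by blast
  have A_part: "{0<..<1} \<inter> \<phi> ` S \<subseteq> A"
  proof clarify
    fix z assume "z \<in> S" "\<phi> z \<in> {0<..<1}"
    have "\<phi> z = (c + r * z) + of_int (- \<lfloor>c + r * y\<rfloor>)"
      unfolding \<phi>_def by simp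
    then have "frac (\<phi> z) = frac (c + r * z)"
      by (simp only: frac_add_of_int_right)
    moreover have "frac (\<phi> z) = \<phi> z"
      using \<open>\<phi> z \<in> {0<..<1}\<close> by simp
    ultimately show "\<phi> z \<in> A"
      using A[OF \<open>z \<in> S\<close>] by simp
  qed
  have "{0<..<1} \<inter> U \<subseteq> {0<..<1} \<inter> closure (\<phi> ` S)"
    using U_closure by blast
  also have "\<dots> \<subseteq> closure ({0<..<1} \<inter> \<phi> ` S)"
    by (rule open_Int_closure_subset) simp
  also have "\<dots> \<subseteq> closure A"
    using A_part by (rule closure_mono)
  finally have "U \<inter> {0<..<1} \<subseteq> interior (closure A)"
    using \<open>open U\<close> by (intro interior_maximal) auto
  with \<open>U \<inter> {0<..<1} \<noteq> {}\<close> show ?thesis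
    by blast
qed

lemma Rats_common_denominator:
  assumes "q \<in> \<rat>" "r \<in> \<rat>"
  obtains D :: nat where "D > 0" "real D * q \<in> \<int>" "real D * r \<in> \<int>"
proof -
  obtain a b where "b > 0" "q = of_int a / of_int b"
    using Rats_cases'[OF assms(1)] by metis
  moreover obtain a' b' where "b' > 0" "r = of_int a' / of_int b'"
    using Rats_cases'[OF assms(2)] by metis
  ultimately have "real (nat (b * b')) * q = of_int (a * b')"
    and "real (nat (b * b')) * r = of_int (a' * b)"
    by simp_all
  then show ?thesis
    using that[of "nat (b * b')"] \<open>b > 0\<close> \<open>b' > 0\<close>
    by (metis Ints_of_int mult_pos_pos zero_less_nat_eq)
qed

lemma frac_Ints_divide:
  assumes "c \<in> \<int>" "D > 0"
  shows "\<exists>k<D. frac (c / real D) = real k / real D"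
proof -
  obtain z where z: "c = of_int z"
    using assms(1) Ints_cases by blast
  have "c / real D = of_int (z div int D) + real (nat (z mod int D)) / real D"
  proof -
    have "z = int D * (z div int D) + z mod int D"
      by simp
    then have "c = real D * of_int (z div int D) + of_int (z mod int D)"
      unfolding z by (metis of_int_add of_int_mult of_int_of_nat_eq)
    then show ?thesis
      using assms(2) by (simp add: field_simps)
  qed
  moreover have "nat (z mod int D) < D"
    using assms(2) by (simp add: nat_less_iff)
  ultimately show ?thesis
    using assms(2) by (auto simp: frac_eq)
qed

lemma funpow_times_mod1:
  assumes "x \<in> {0..<1}"
  shows "(times_mod1 m ^^ n) x = frac (real m ^ n * x)"
proof (induction n)
  case (Suc n)
  have "frac (real m * frac y) = frac (real m * y)" for y :: real
  proof -
    have "real m * y = real m * frac y + of_int (int m * \<lfloor>y\<rfloor>)"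
      by (simp add: frac_def algebra_simps)
    then show ?thesis
      by (metis frac_add_of_int_right)
  qed
  then show ?case
    using Suc by (simp add: times_mod1_def mult.assoc)
qed (use assms in simp)

lemma funpow_invariant:
  assumes "f ` A \<subseteq> A" "x \<in> A"
  shows "(f ^^ n) x \<in> A"
  using assms by (induction n) auto

definition digit_sum :: "nat \<Rightarrow> (nat \<Rightarrow> nat) \<Rightarrow> real" where
  "digit_sum m e = (\<Sum>k. real (e k) / real m ^ Suc k)"

lemma digit_sum_bounds:
  assumes m: "m \<ge> 2" and e: "\<And>k. e k < m"
  shows "summable (\<lambda>k. real (e k) / real m ^ Suc k)" "0 \<le> digit_sum m e" "digit_sum m e \<le> 1"
proof -
  have geo: "(\<lambda>k. (real m - 1) / real m * (1 / real m) ^ k) sums 1"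
  proof -
    have "(\<lambda>k. (real m - 1) / real m * (1 / real m) ^ k)
        sums ((real m - 1) / real m * (1 / (1 - 1 / real m)))"
      using m by (intro sums_mult geometric_sums) auto
    moreover have "(real m - 1) / real m * (1 / (1 - 1 / real m)) = 1"
      using m by (simp add: field_simps)
    ultimately show ?thesis
      by metis
  qed
  have le: "real (e k) / real m ^ Suc k \<le> (real m - 1) / real m * (1 / real m) ^ k" for k
  proof -
    have "real (e k) \<le> real m - 1"
      using e[of k] by (simp add: nat_less_real_le)
    then have "real (e k) / real m ^ Suc k \<le> (real m - 1) / real m ^ Suc k"
      using m by (intro divide_right_mono) auto
    then show ?thesis
      by (simp add: power_one_over)
  qed
  show s: "summable (\<lambda>k. real (e k) / real m ^ Suc k)"
    using le by (intro summable_comparison_test'[OF sums_summable[OF geo]]) auto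
  show "0 \<le> digit_sum m e"
    unfolding digit_sum_def using s by (intro suminf_nonneg) auto
  show "digit_sum m e \<le> 1"
    unfolding digit_sum_def using suminf_le[OF le s sums_summable[OF geo]] sums_unique[OF geo]
    by simp
qed

lemma digit_sum_split:
  assumes m: "m \<ge> 2" and e: "\<And>k. e k < m"
  shows "digit_sum m e =
    (\<Sum>k<L. real (e k) / real m ^ Suc k) + digit_sum m (\<lambda>k. e (k + L)) / real m ^ L"
proof -
  have s: "summable (\<lambda>k. real (e (k + L)) / real m ^ Suc k)"
    using digit_sum_bounds(1)[OF m, where e = "\<lambda>k. e (k + L)"] e by simp
  have "digit_sum m e
      = (\<Sum>k. real (e (k + L)) / real m ^ Suc (k + L)) + (\<Sum>k<L. real (e k) / real m ^ Suc k)"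
    unfolding digit_sum_def
    using suminf_split_initial_segment[OF digit_sum_bounds(1)[OF m e], where k = L] by simp
  also have "(\<Sum>k. real (e (k + L)) / real m ^ Suc (k + L))
      = (\<Sum>k. real (e (k + L)) / real m ^ Suc k / real m ^ L)"
    by (simp add: power_add field_simps)
  also have "\<dots> = digit_sum m (\<lambda>k. e (k + L)) / real m ^ L"
    unfolding digit_sum_def using suminf_divide[OF s] by simp
  finally show ?thesis
    by simp
qed

fun base_digits :: "nat \<Rightarrow> nat \<Rightarrow> nat \<Rightarrow> nat list" where
  "base_digits m 0 j = []"
| "base_digits m (Suc L) j = j div m ^ L # base_digits m L (j mod m ^ L)"

lemma length_base_digits [simp]: "length (base_digits m L j) = L"
  by (induction L arbitrary: j) auto

lemma set_base_digits:
  assumes "j < m ^ L"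
  shows "set (base_digits m L j) \<subseteq> {..<m}"
  using assms
proof (induction L arbitrary: j)
  case (Suc L)
  then have "m > 0"
    by (cases m) auto
  with Suc.prems have "j div m ^ L < m" "j mod m ^ L < m ^ L"
    by (auto simp: less_mult_imp_div_less mult.commute)
  then show ?case
    using Suc.IH by auto
qed simp

lemma sum_base_digits:
  assumes "m > 0" "j < m ^ L"
  shows "(\<Sum>l<L. real (base_digits m L j ! l) / real m ^ Suc l) = real j / real m ^ L"
  using assms(2)
proof (induction L arbitrary: j)
  case (Suc L)
  have "(\<Sum>l<Suc L. real (base_digits m (Suc L) j ! l) / real m ^ Suc l)
      = real (j div m ^ L) / real m
        + (\<Sum>l<L. real (base_digits m L (j mod m ^ L) ! l) / real m ^ Suc (Suc l))"
    by (simp add: sum.lessThan_Suc_shift del: sum.lessThan_Suc)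
  also have "(\<Sum>l<L. real (base_digits m L (j mod m ^ L) ! l) / real m ^ Suc (Suc l))
      = (\<Sum>l<L. real (base_digits m L (j mod m ^ L) ! l) / real m ^ Suc l) / real m"
    by (simp add: sum_divide_distrib field_simps)
  also have "\<dots> = real (j mod m ^ L) / real m ^ L / real m"
    using Suc.IH[of "j mod m ^ L"] assms(1) by (simp only: mod_less_divisor zero_less_power)
  also have "real (j div m ^ L) / real m + \<dots> = real j / real m ^ Suc L"
  proof -
    have "real j = real (j div m ^ L) * real m ^ L + real (j mod m ^ L)"
      by (metis of_nat_add of_nat_mult of_nat_power div_mult_mod_eq)
    then show ?thesis
      using assms(1) by (simp add: field_simps)
  qed
  finally show ?case .
qed simp

definition expansion_tail :: "nat \<Rightarrow> (nat \<Rightarrow> nat) \<Rightarrow> nat \<Rightarrow> real" where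
  "expansion_tail m d n = digit_sum m (\<lambda>k. d (n + Suc k))"

lemma m_adic_expansion_shift:
  assumes m: "m \<ge> 2" and "m_adic_expansion m d t"
  obtains N :: nat where "real m ^ n * t = real N + expansion_tail m d n"
proof -
  have digits: "\<And>k. d (Suc k) < m" and t: "t = digit_sum m (\<lambda>k. d (Suc k))"
    using assms(2) unfolding m_adic_expansion_def digit_sum_def by (auto simp: sums_iff)
  have tail: "digit_sum m (\<lambda>k. d (Suc (k + n))) = expansion_tail m d n"
    unfolding expansion_tail_def by (simp add: add.commute)
  have "t = (\<Sum>k<n. real (d (Suc k)) / real m ^ Suc k) + expansion_tail m d n / real m ^ n"
    unfolding t by (simp only: flip: tail) (rule digit_sum_split[OF m digits])
  moreover have "real m ^ n * (\<Sum>k<n. real (d (Suc k)) / real m ^ Suc k)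
      = real (\<Sum>k<n. d (Suc k) * m ^ (n - Suc k))"
    unfolding sum_distrib_left of_nat_sum
  proof (rule sum.cong)
    fix k assume "k \<in> {..<n}"
    then have "real m ^ (n - Suc k) = real m ^ n / real m ^ Suc k"
      using m by (intro power_diff) auto
    then show "real m ^ n * (real (d (Suc k)) / real m ^ Suc k) = real (d (Suc k) * m ^ (n - Suc k))"
      by simp
  qed simp
  ultimately have "real m ^ n * t = real (\<Sum>k<n. d (Suc k) * m ^ (n - Suc k)) + expansion_tail m d n"
    using m by (simp add: distrib_left)
  then show ?thesis
    by (rule that)
qed

lemma expansion_tail_in_cylinder:
  assumes m: "m \<ge> 2" and digits: "\<forall>k\<ge>1. d k < m" and "j < m ^ L"
    and occ: "occurs_at d (base_digits m L j) (Suc n)"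
  shows "real j / real m ^ L \<le> expansion_tail m d n"
    and "expansion_tail m d n \<le> (real j + 1) / real m ^ L"
proof -
  have "(\<Sum>k<L. real (d (n + Suc k)) / real m ^ Suc k)
      = (\<Sum>k<L. real (base_digits m L j ! k) / real m ^ Suc k)"
    using occ unfolding occurs_at_def by (intro sum.cong) auto
  moreover have "expansion_tail m d n = (\<Sum>k<L. real (d (n + Suc k)) / real m ^ Suc k)
      + digit_sum m (\<lambda>k. d (n + Suc (k + L))) / real m ^ L"
    unfolding expansion_tail_def by (rule digit_sum_split[OF m]) (use digits in auto)
  moreover have "m > 0"
    using m by simp
  ultimately have tail: "expansion_tail m d n
      = real j / real m ^ L + digit_sum m (\<lambda>k. d (n + Suc (k + L))) / real m ^ L"
    using sum_base_digits[OF _ \<open>j < m ^ L\<close>] by simp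
  have "0 \<le> digit_sum m (\<lambda>k. d (n + Suc (k + L)))" "digit_sum m (\<lambda>k. d (n + Suc (k + L))) \<le> 1"
    using digit_sum_bounds(2,3)[OF m] digits by auto
  then show "real j / real m ^ L \<le> expansion_tail m d n"
    and "expansion_tail m d n \<le> (real j + 1) / real m ^ L"
    unfolding tail using m by (simp_all add: add_divide_distrib divide_right_mono)
qed

lemma normal_expansion_occurs:
  assumes "normal_expansion m d" "m > 0" "a \<noteq> []" "set a \<subseteq> {..<m}"
  obtains k where "k \<ge> 1" "occurs_at d a k"
proof -
  have freq: "(\<lambda>N. real (card {k \<in> {1..N}. occurs_at d a k}) / real N) \<longlonglongrightarrow> 1 / real m ^ length a"
    using assms unfolding normal_expansion_def by blast
  have "0 < 1 / real m ^ length a"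
    using assms(2) by simp
  from order_tendstoD(1)[OF freq this]
  obtain N where "0 < real (card {k \<in> {1..N}. occurs_at d a k}) / real N"
    unfolding eventually_sequentially by auto
  then have "{k \<in> {1..N}. occurs_at d a k} \<noteq> {}"
    by (metis card.empty div_0 less_irrefl of_nat_0)
  then show ?thesis
    using that by auto
qed

lemma normal_expansion_tails_dense:
  assumes m: "m \<ge> 2" and "m_adic_expansion m d t" "normal_expansion m d"
  shows "{0<..<1} \<subseteq> closure (range (expansion_tail m d))"
proof (clarsimp simp: closure_approachable dist_real_def)
  fix y \<epsilon> :: real
  assume y: "0 < y" "y < 1" and "0 < \<epsilon>"
  have "1 / real m < 1"
    using m by simp
  then obtain K where "(1 / real m) ^ K < \<epsilon>"
    using real_arch_pow_inv[OF \<open>0 < \<epsilon>\<close>] by blast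
  moreover have "(1 / real m) ^ Suc K \<le> (1 / real m) ^ K"
    using m by (intro power_decreasing) auto
  ultimately have small: "1 / real m ^ Suc K < \<epsilon>"
    by (simp add: power_one_over)
  define L where "L = Suc K"
  define j where "j = nat \<lfloor>y * real m ^ L\<rfloor>"
  have mL: "real m ^ L > 0"
    using m by simp
  have yj: "real j \<le> y * real m ^ L" "y * real m ^ L < real j + 1"
    unfolding j_def using y mL by auto
  moreover have "y * real m ^ L < real m ^ L"
    using y mL by simp
  ultimately have "real j < real m ^ L"
    by linarith
  then have "j < m ^ L"
    by (metis of_nat_less_iff of_nat_power)
  have "base_digits m L j \<noteq> []"
    unfolding L_def by simp
  moreover have "m > 0"
    using m by simp
  ultimately obtain k where "k \<ge> 1" "occurs_at d (base_digits m L j) k"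
    using normal_expansion_occurs[OF assms(3) _ _ set_base_digits[OF \<open>j < m ^ L\<close>]] by blast
  then have occ: "occurs_at d (base_digits m L j) (Suc (k - 1))"
    by simp
  have digits: "\<forall>k\<ge>1. d k < m"
    using assms(2) unfolding m_adic_expansion_def by blast
  note cyl = expansion_tail_in_cylinder[OF m digits \<open>j < m ^ L\<close> occ]
  have "real j / real m ^ L \<le> y" "y < (real j + 1) / real m ^ L"
    using yj mL by (simp_all add: field_simps)
  then have "\<bar>expansion_tail m d (k - 1) - y\<bar> \<le> 1 / real m ^ L"
    using cyl by (simp add: abs_le_iff add_divide_distrib)
  then have "\<bar>expansion_tail m d (k - 1) - y\<bar> < \<epsilon>"
    using small unfolding L_def by linarith
  then show "\<exists>n. \<bar>expansion_tail m d n - y\<bar> < \<epsilon>"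
    by blast
qed

lemma times_mod1_orbit_rational_affine:
  assumes m: "m \<ge> 2" and ex: "m_adic_expansion m d t" and "q \<in> \<rat>" "r \<in> \<rat>"
    and "x \<in> {0..<1}" and x: "x = q + r * t"
  obtains D :: nat and label :: "nat \<Rightarrow> nat"
  where "D > 0" "\<And>n. label n < D"
    "\<And>n. (times_mod1 m ^^ n) x = frac (real (label n) / real D + r * expansion_tail m d n)"
proof -
  have "\<forall>n. \<exists>N::nat. real m ^ n * t = real N + expansion_tail m d n"
    using m_adic_expansion_shift[OF m ex] by metis
  then obtain N :: "nat \<Rightarrow> nat" where N: "\<And>n. real m ^ n * t = real (N n) + expansion_tail m d n"
    by metis
  obtain D :: nat where "D > 0" and Dq: "real D * q \<in> \<int>" and Dr: "real D * r \<in> \<int>"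
    using Rats_common_denominator[OF \<open>q \<in> \<rat>\<close> \<open>r \<in> \<rat>\<close>] by blast
  define c where "c n = real D * (real m ^ n * q + r * real (N n))" for n
  have c_Ints: "c n \<in> \<int>" for n
  proof -
    have "c n = (real m ^ n) * (real D * q) + (real D * r) * real (N n)"
      unfolding c_def by (simp add: algebra_simps)
    then show ?thesis
      using Dq Dr by simp
  qed
  have "\<forall>n. \<exists>k<D. frac (c n / real D) = real k / real D"
    using frac_Ints_divide[OF c_Ints \<open>D > 0\<close>] by blast
  then obtain label :: "nat \<Rightarrow> nat"
    where label: "\<And>n. label n < D" "\<And>n. frac (c n / real D) = real (label n) / real D"
    by metis
  have "(times_mod1 m ^^ n) x = frac (real (label n) / real D + r * expansion_tail m d n)" for n
  proof -
    have "real m ^ n * x = real m ^ n * q + r * (real m ^ n * t)"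
      unfolding x by (simp add: algebra_simps)
    also have "\<dots> = (real m ^ n * q + r * real (N n)) + r * expansion_tail m d n"
      unfolding N by (simp add: algebra_simps)
    also have "real m ^ n * q + r * real (N n) = c n / real D"
      unfolding c_def using \<open>D > 0\<close> by simp
    finally have "real m ^ n * x = c n / real D + r * expansion_tail m d n" .
    then show ?thesis
      using funpow_times_mod1[OF \<open>x \<in> {0..<1}\<close>] by (simp flip: label(2))
  qed
  with \<open>D > 0\<close> label(1) show ?thesis
    by (rule that)
qed

lemma invariant_set_not_nowhere_dense:
  assumes m: "m \<ge> 2" and inv: "times_mod1 m ` A \<subseteq> A" and "A \<subseteq> {0..<1}"
    and "normal_in_base m t" and "x \<in> A" and "q \<in> \<rat>" "r \<in> \<rat>" "r \<noteq> 0"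
    and "x = q + r * t"
  shows "\<not> nowhere_dense A"
proof -
  obtain d where ex: "m_adic_expansion m d t" and "normal_expansion m d"
    using assms(4) unfolding normal_in_base_def by blast
  define s where "s = expansion_tail m d"
  have "x \<in> {0..<1}"
    using \<open>x \<in> A\<close> \<open>A \<subseteq> {0..<1}\<close> by blast
  then obtain D :: nat and label :: "nat \<Rightarrow> nat" where "D > 0" "\<And>n. label n < D"
    and orbit: "\<And>n. (times_mod1 m ^^ n) x = frac (real (label n) / real D + r * s n)"
    unfolding s_def
    by (rule times_mod1_orbit_rational_affine[OF m ex \<open>q \<in> \<rat>\<close> \<open>r \<in> \<rat>\<close> _
          \<open>x = q + r * t\<close>]) auto
  have "{0<..<1} \<subseteq> closure (range s)"
    unfolding s_def by (rule normal_expansion_tails_dense[OF m ex \<open>normal_expansion m d\<close>])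
  then have "interior {0<..<1} \<subseteq> interior (closure (range s))"
    by (rule interior_mono)
  then have "interior (closure (s ` UNIV)) \<noteq> {}"
    by auto
  moreover have "finite (range label)"
    by (rule finite_subset[of _ "{..<D}"]) (use \<open>\<And>n. label n < D\<close> in auto)
  ultimately obtain k where "interior (closure (s ` {n. label n = k})) \<noteq> {}"
    using interior_closure_image_finite_label[of label UNIV s] by auto
  then have "interior (closure A) \<noteq> {}"
  proof (rule interior_closure_frac_affine_image[OF _ \<open>r \<noteq> 0\<close>])
    fix z assume "z \<in> s ` {n. label n = k}"
    then obtain n where "label n = k" "z = s n"
      by blast
    then show "frac (real k / real D + r * z) \<in> A"
      using orbit[of n] funpow_invariant[OF inv \<open>x \<in> A\<close>, of n] by simp
  qed
  then show ?thesis
    unfolding nowhere_dense_def by blast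
qed

theorem theorem4:
  fixes m :: nat and A :: "real set"
  assumes "m \<ge> 2"
    and "A \<subseteq> {0..<1}"
    and "nowhere_dense A"
    and "times_mod1 m ` A \<subseteq> A"
  shows "\<forall>t i. t \<in> {0<..<1} \<and> normal_in_base m t \<and> i \<noteq> (0::int) \<longrightarrow>
           (\<forall>x\<in>A. x + real_of_int i * t \<notin> \<rat>) \<and>
           (\<forall>x\<in>A - {0}. x / (real_of_int i * t) \<notin> \<rat>)"
proof (intro allI impI conjI ballI notI)
  fix t x and i :: int
  assume H: "t \<in> {0<..<1} \<and> normal_in_base m t \<and> i \<noteq> 0"
  note not_nowhere_dense = invariant_set_not_nowhere_dense[OF assms(1,4,2)]
  {
    assume "x \<in> A" "x + real_of_int i * t \<in> \<rat>"
    then have "\<not> nowhere_dense A"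
      using H by (intro not_nowhere_dense[of t x "x + real_of_int i * t" "- real_of_int i"]) auto
    with assms(3) show False
      by contradiction
  next
    assume x: "x \<in> A - {0}" and "x / (real_of_int i * t) \<in> \<rat>"
    define \<rho> where "\<rho> = x / (real_of_int i * t) * real_of_int i"
    have "\<rho> \<in> \<rat>"
      unfolding \<rho>_def using \<open>x / (real_of_int i * t) \<in> \<rat>\<close> by (intro Rats_mult) auto
    moreover have "\<rho> \<noteq> 0" "x = 0 + \<rho> * t"
      unfolding \<rho>_def using H x by auto
    ultimately have "\<not> nowhere_dense A"
      using H x by (intro not_nowhere_dense[of t x 0 \<rho>]) auto
    with assms(3) show False
      by contradiction
  }
qed

end
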